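(* Let $(X_1,Y_1)^\top,\dots,(X_n,Y_n)^\top$ be i.i.d. with the same distribution as the random element $(X,Y)^\top$ of $\mathcal{H}\times\mathcal{H}$. Let $\eta_n=\sup_{\|u\|=\|v\|=1}|g_n(u,v)-\gamma_{XY}(u,v)|$, $\zeta_n=\sup_{\|u\|=1}|s_{n,X}^2(u)-\sigma_X^2(u)|$ and $\nu_n=\sup_{\|v\|=1}|s_{n,Y}^2(v)-\sigma_Y^2(v)|$. Assume: (C1) there exist $c>0$ and a self-adjoint, positive, compact operator $\Gamma=\begin{pmatrix}\Gamma_{11}&\Gamma_{12}\\ \Gamma_{21}&\Gamma_{22}\end{pmatrix}$ on $\mathcal{H}\times\mathcal{H}$ such that for all $u,v\in\mathcal{H}$, $\sigma_X^2(u)=c\langle u,\Gamma_{11}u\rangle$, $\sigma_Y^2(v)=c\langle v,\Gamma_{22}v\rangle$, $\gamma_{XY}(u,v)=c\langle u,\Gamma_{12}v\rangle$, and the eigenfunctions of $\Gamma_{11}$ and $\Gamma_{22}$ lie in $\mathcal{H}_{\mathrm{smooth}}$; (C3) (a) for every $u\in\mathcal{N}$, $u\neq0$, $\sigma_X(u)\ne0$ and $\sigma_Y(u)\neq0$; (b) $\mathcal{N}$ is finite dimensional and there exists $d>0$ such that $\Psi(u)>d\|u\|^2$ for all $u\in\mathcal{N}^\perp$. If $\tau_n\to0$ and $\tau_n^{-1}\max(\zeta_n,\nu_n,\eta_n)\to0$ almost surely as $n\to\infty$, then $C_{n,X}\to0$, $C_{n,Y}\to0$ and $C_{n,XY}\to0$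 almost surely.
   Context: $\mathcal{H}$ is a separable real Hilbert space with inner product $\langle\cdot,\cdot\rangle$ and norm $\|\cdot\|$. A bivariate co-association functional $\gamma_{\mathrm{R}}$ assigns a real number to each bivariate distribution with $\gamma_{\mathrm{R}}(U,V)=\gamma_{\mathrm{R}}(V,U)$ and $\gamma_{\mathrm{R}}(aU+b,cV+d)=ac\,\gamma_{\mathrm{R}}(U,V)$; a scale functional $\sigma_{\mathrm{R}}\ge0$ satisfies $\sigma_{\mathrm{R}}(aU+b)=|a|\sigma_{\mathrm{R}}(U)$; it is assumed $\gamma_{\mathrm{R}}^2(U,V)\le\sigma_{\mathrm{R}}^2(U)\sigma_{\mathrm{R}}^2(V)$. For $u,v\in\mathcal{H}$: $\sigma_X(u)$, $\sigma_Y(v)$, $\gamma_{XY}(u,v)$ are $\sigma_{\mathrm{R}}$ of the law of $\langle u,X\rangle$, $\sigma_{\mathrm{R}}$ of the law of $\langle v,Y\rangle$, and $\gamma_{\mathrm{R}}$ of the law of $(\langle u,X\rangle,\langle v,Y\rangle)$; $s_{n,X}(u)$, $s_{n,Y}(v)$, $g_n(u,v)$ are the same functionals applied to the empirical distributions of $\langle u,X_i\rangle$, $\langle v,Y_i\rangle$, and $(\langle u,X_i\rangle,\langle v,Y_i\rangle)$, $1\le i\le n$. $\mathcal{H}_{\mathrm{smooth}}\subset\mathcal{H}$ is the set of smooth elements, $D:\mathcal{H}_{\mathrm{smooth}}\to\mathcal{H}$ is linear, $\lceil u,v\rceil=\langle Du,Dv\rangle$, $\Psi(u)=\lceil u,u\rceil$,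 $\mathcal{N}$ is the null space of $\lceil\cdot,\cdot\rceil$ and $\mathcal{N}^\perp$ its orthogonal complement. For $u,v\in\mathcal{H}_{\mathrm{smooth}}$, $\|u\|_{1,\tau}^2=\sigma_X^2(u)+\tau\Psi(u)$, $\|v\|_{2,\tau}^2=\sigma_Y^2(v)+\tau\Psi(v)$; $C_{n,X}=\sup_{\|u\|_{1,\tau_n}=1}|s_{n,X}^2(u)-\sigma_X^2(u)|$, $C_{n,Y}=\sup_{\|v\|_{2,\tau_n}=1}|s_{n,Y}^2(v)-\sigma_Y^2(v)|$, $C_{n,XY}=\sup_{\|u\|_{1,\tau_n}=\|v\|_{2,\tau_n}=1}|g_n(u,v)-\gamma_{XY}(u,v)|$. *)

theory Defs
  imports "HOL-Probability.Probability"
begin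

definition separable_space :: "'a::topological_space itself \<Rightarrow> bool" where
  "separable_space _ \<longleftrightarrow> (\<exists>S::'a set. countable S \<and> closure S = UNIV)"

definition emp_dist :: "nat \<Rightarrow> (nat \<Rightarrow> 'b::topological_space) \<Rightarrow> 'b measure" where
  "emp_dist n z = distr (uniform_count_measure {..<n}) borel z"

definition is_dist :: "'b::topological_space measure \<Rightarrow> bool" where
  "is_dist P \<longleftrightarrow> prob_space P \<and> sets P = sets borel"

definition coassoc_functional :: "((real \<times> real) measure \<Rightarrow> real) \<Rightarrow> bool" where
  "coassoc_functional \<gamma>R \<longleftrightarrow>
     (\<forall>P. is_dist P \<longrightarrow>
        \<gamma>R (distr P borel (\<lambda>(x,y). (y,x))) = \<gamma>R P \<and>
        (\<forall>a b c d. \<gamma>R (distr P borel (\<lambda>(x,y). (a*x+b, c*y+d))) = a * c * \<gamma>R P))"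

definition scale_functional :: "(real measure \<Rightarrow> real) \<Rightarrow> bool" where
  "scale_functional \<sigma>R \<longleftrightarrow>
     (\<forall>P. is_dist P \<longrightarrow> \<sigma>R P \<ge> 0 \<and>
        (\<forall>a b. \<sigma>R (distr P borel (\<lambda>x. a*x+b)) = \<bar>a\<bar> * \<sigma>R P))"

definition cs_bound :: "((real \<times> real) measure \<Rightarrow> real) \<Rightarrow> (real measure \<Rightarrow> real) \<Rightarrow> bool" where
  "cs_bound \<gamma>R \<sigma>R \<longleftrightarrow>
     (\<forall>P. is_dist P \<longrightarrow>
        (\<gamma>R P)\<^sup>2 \<le> (\<sigma>R (distr P borel fst))\<^sup>2 * (\<sigma>R (distr P borel snd))\<^sup>2)"

definition pop_sig :: "(real measure \<Rightarrow> real) \<Rightarrow> 'w measure \<Rightarrow> ('w \<Rightarrow> 'h::real_inner) \<Rightarrow> 'h \<Rightarrow> real" where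
  "pop_sig \<sigma>R M X u = \<sigma>R (distr M borel (\<lambda>\<omega>. inner u (X \<omega>)))"

definition pop_gam :: "((real \<times> real) measure \<Rightarrow> real) \<Rightarrow> 'w measure \<Rightarrow> ('w \<Rightarrow> 'h::real_inner)
    \<Rightarrow> ('w \<Rightarrow> 'h) \<Rightarrow> 'h \<Rightarrow> 'h \<Rightarrow> real" where
  "pop_gam \<gamma>R M X Y u v = \<gamma>R (distr M borel (\<lambda>\<omega>. (inner u (X \<omega>), inner v (Y \<omega>))))"

definition emp_sig :: "(real measure \<Rightarrow> real) \<Rightarrow> (nat \<Rightarrow> 'w \<Rightarrow> 'h::real_inner) \<Rightarrow> nat \<Rightarrow> 'w \<Rightarrow> 'h \<Rightarrow> real" where
  "emp_sig \<sigma>R X n \<omega> u = \<sigma>R (emp_dist n (\<lambda>i. inner u (X i \<omega>)))"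

definition emp_gam :: "((real \<times> real) measure \<Rightarrow> real) \<Rightarrow> (nat \<Rightarrow> 'w \<Rightarrow> 'h::real_inner)
    \<Rightarrow> (nat \<Rightarrow> 'w \<Rightarrow> 'h) \<Rightarrow> nat \<Rightarrow> 'w \<Rightarrow> 'h \<Rightarrow> 'h \<Rightarrow> real" where
  "emp_gam \<gamma>R X Y n \<omega> u v = \<gamma>R (emp_dist n (\<lambda>i. (inner u (X i \<omega>), inner v (Y i \<omega>))))"

definition self_adjoint :: "('a::real_inner \<Rightarrow> 'a) \<Rightarrow> bool" where
  "self_adjoint T \<longleftrightarrow> (\<forall>x y. inner (T x) y = inner x (T y))"

definition positive_op :: "('a::real_inner \<Rightarrow> 'a) \<Rightarrow> bool" where
  "positive_op T \<longleftrightarrow> (\<forall>x. inner x (T x) \<ge> 0)"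

definition compact_op :: "('a::real_normed_vector \<Rightarrow> 'b::real_normed_vector) \<Rightarrow> bool" where
  "compact_op T \<longleftrightarrow> bounded_linear T \<and> compact (closure (T ` cball 0 1))"

definition blk11 :: "('h::real_vector \<times> 'h \<Rightarrow> 'h \<times> 'h) \<Rightarrow> 'h \<Rightarrow> 'h" where
  "blk11 G u = fst (G (u, 0))"
definition blk12 :: "('h::real_vector \<times> 'h \<Rightarrow> 'h \<times> 'h) \<Rightarrow> 'h \<Rightarrow> 'h" where
  "blk12 G v = fst (G (0, v))"
definition blk21 :: "('h::real_vector \<times> 'h \<Rightarrow> 'h \<times> 'h) \<Rightarrow> 'h \<Rightarrow> 'h" where
  "blk21 G u = snd (G (u, 0))"
definition blk22 :: "('h::real_vector \<times> 'h \<Rightarrow> 'h \<times> 'h) \<Rightarrow> 'h \<Rightarrow> 'h" where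
  "blk22 G v = snd (G (0, v))"

definition eigenfunction :: "('h::real_vector \<Rightarrow> 'h) \<Rightarrow> 'h \<Rightarrow> bool" where
  "eigenfunction T u \<longleftrightarrow> u \<noteq> 0 \<and> (\<exists>l::real. T u = l *\<^sub>R u)"

definition rough :: "('h::real_inner \<Rightarrow> 'h) \<Rightarrow> 'h \<Rightarrow> 'h \<Rightarrow> real" where
  "rough D u v = inner (D u) (D v)"
definition Psi :: "('h::real_inner \<Rightarrow> 'h) \<Rightarrow> 'h \<Rightarrow> real" where
  "Psi D u = rough D u u"
definition nullsp :: "'h set \<Rightarrow> ('h::real_inner \<Rightarrow> 'h) \<Rightarrow> 'h set" where
  "nullsp Hs D = {u \<in> Hs. \<forall>v\<in>Hs. rough D u v = 0}"
definition orth_compl :: "'h::real_inner set \<Rightarrow> 'h set" where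
  "orth_compl S = {w. \<forall>u\<in>S. inner w u = 0}"

definition linear_on :: "'h::real_vector set \<Rightarrow> ('h \<Rightarrow> 'h) \<Rightarrow> bool" where
  "linear_on S D \<longleftrightarrow> (\<forall>x\<in>S. \<forall>y\<in>S. \<forall>a b::real. D (a *\<^sub>R x + b *\<^sub>R y) = a *\<^sub>R D x + b *\<^sub>R D y)"

end

theory Submission
  imports Defs
begin

(* On the penalized sphere sigma^2(u) + tau Psi(u) = 1 every u satisfies ||u||^2 <= C / tau once
   tau <= 1: split u = y + z with y in the finite-dimensional null space N of Psi and z orthogonal
   to N. Then tau d ||z||^2 <= tau Psi(z) <= 1, and sigma^2 = c <u, Gamma_11 u> is bounded by a
   multiple of ||z||^2 on z and, being positive definite on the finite-dimensional space N, is
   coercive on y. The errors |s_n^2 - sigma^2| and |g_n - gamma| are homogeneous of degree two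
   (resp. of bidegree (1, 1)), so their suprema over the penalized spheres are at most C / tau_n times their
   suprema over unit spheres, which vanish by the rate assumption. The penalized spheres are
   nonempty because Gamma_11, a compact positive operator, has a nonzero eigenfunction, and
   eigenfunctions are smooth. *)

lemma measurable_uniform_count_measure_borel:
  "z \<in> measurable (uniform_count_measure {..<n}) borel"
  by (simp add: measurable_def sets_uniform_count_measure space_uniform_count_measure Pi_iff)

lemma is_dist_emp_dist:
  assumes "0 < n"
  shows "is_dist (emp_dist n z)"
proof -
  have "prob_space (uniform_count_measure {..<n})"
    using assms by (intro prob_space_uniform_count_measure) auto
  then have "prob_space (distr (uniform_count_measure {..<n}) borel z)"
    by (rule prob_space.prob_space_distr[OF _ measurable_uniform_count_measure_borel])
  then show ?thesis
    by (simp add: is_dist_def emp_dist_def)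
qed

lemma emp_dist_comp:
  assumes "f \<in> borel_measurable borel"
  shows "emp_dist n (\<lambda>i. f (z i)) = distr (emp_dist n z) borel f"
  unfolding emp_dist_def
  by (subst distr_distr[OF assms measurable_uniform_count_measure_borel]) (simp add: comp_def)

lemma emp_sig_scaleR:
  assumes "scale_functional \<sigma>R" "0 < n"
  shows "emp_sig \<sigma>R X n \<omega> (a *\<^sub>R u) = \<bar>a\<bar> * emp_sig \<sigma>R X n \<omega> u"
proof -
  let ?P = "emp_dist n (\<lambda>i. inner u (X i \<omega>))"
  have "emp_dist n (\<lambda>i. inner (a *\<^sub>R u) (X i \<omega>)) = distr ?P borel (\<lambda>x. a * x + 0)"
    by (simp flip: emp_dist_comp)
  moreover have "\<sigma>R (distr ?P borel (\<lambda>x. a * x + 0)) = \<bar>a\<bar> * \<sigma>R ?P"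
    using assms is_dist_emp_dist unfolding scale_functional_def by blast
  ultimately show ?thesis
    unfolding emp_sig_def by simp
qed

lemma emp_gam_scaleR:
  assumes "coassoc_functional \<gamma>R" "0 < n"
  shows "emp_gam \<gamma>R X Y n \<omega> (a *\<^sub>R u) (b *\<^sub>R v) = a * b * emp_gam \<gamma>R X Y n \<omega> u v"
proof -
  let ?P = "emp_dist n (\<lambda>i. (inner u (X i \<omega>), inner v (Y i \<omega>)))"
  have "emp_dist n (\<lambda>i. (inner (a *\<^sub>R u) (X i \<omega>), inner (b *\<^sub>R v) (Y i \<omega>)))
      = distr ?P borel (\<lambda>(x, y). (a * x + 0, b * y + 0))"
    by (subst emp_dist_comp[symmetric])
      (auto simp: case_prod_beta intro!: borel_measurable_continuous_onI continuous_intros)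
  moreover have "\<gamma>R (distr ?P borel (\<lambda>(x, y). (a * x + 0, b * y + 0))) = a * b * \<gamma>R ?P"
    using assms is_dist_emp_dist unfolding coassoc_functional_def by blast
  ultimately show ?thesis
    unfolding emp_gam_def by simp
qed

lemma quadratic_form_scaleR:
  "linear A \<Longrightarrow> inner (a *\<^sub>R x) (A (a *\<^sub>R x)) = a\<^sup>2 * inner x (A x)"
  by (simp add: linear_cmul power2_eq_square)

lemma orthogonal_projection_span_exists:
  fixes B :: "'a::real_inner set"
  assumes "finite B"
  obtains y where "y \<in> span B" "\<And>w. w \<in> span B \<Longrightarrow> orthogonal (x - y) w"
proof -
  obtain C where C: "finite C" "span C = span B" "pairwise orthogonal C"
    using basis_orthogonal[OF assms] by blast
  define y where "y = (\<Sum>b\<in>C. (inner b x / inner b b) *\<^sub>R b)"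
  have "orthogonal (x - y) c" if "c \<in> C" for c
  proof -
    have "inner y c = (\<Sum>b\<in>C. if b = c then inner c x else 0)"
      unfolding y_def inner_sum_left
      using C(3) that by (intro sum.cong) (auto simp: pairwise_def orthogonal_def)
    then show ?thesis
      using C(1) that by (simp add: orthogonal_def inner_diff_right inner_commute)
  qed
  then show thesis
    using C(2) orthogonal_to_span
    by (intro that[of y]) (auto simp: y_def span_sum span_scale span_base simp flip: C(2))
qed

lemma span_insert_orthogonal_Int_cball:
  fixes b :: "'a::real_inner"
  assumes "b \<noteq> 0" "\<And>s. s \<in> span C \<Longrightarrow> orthogonal b s"
  shows "span (insert b C) \<inter> cball 0 R = (\<lambda>p. fst p + snd p *\<^sub>R b) `
    ((span C \<inter> cball 0 R) \<times> {-R / norm b..R / norm b} \<inter> {p. norm (fst p + snd p *\<^sub>R b) \<le> R})"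
proof (intro equalityI subsetI)
  fix w assume w: "w \<in> span (insert b C) \<inter> cball 0 R"
  then obtain k where s: "w - k *\<^sub>R b \<in> span C"
    by (auto simp: span_insert)
  define s where "s = w - k *\<^sub>R b"
  have "(norm w)\<^sup>2 = (norm s)\<^sup>2 + (\<bar>k\<bar> * norm b)\<^sup>2"
    using norm_add_Pythagorean[of s "k *\<^sub>R b"] assms(2)[OF s]
    by (simp add: s_def orthogonal_commute orthogonal_clauses)
  moreover have "(norm w)\<^sup>2 \<le> R\<^sup>2"
    using w by (auto intro: power_mono)
  ultimately have "(norm s)\<^sup>2 \<le> R\<^sup>2" "(\<bar>k\<bar> * norm b)\<^sup>2 \<le> R\<^sup>2"
    by (smt (verit) zero_le_power2)+
  moreover have "0 \<le> R"
    using w by (auto intro: order.trans[OF norm_ge_zero])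
  ultimately have "norm s \<le> R" "\<bar>k\<bar> * norm b \<le> R"
    by (auto intro: power2_le_imp_le)
  then have "\<bar>k\<bar> \<le> R / norm b"
    using assms(1) by (simp add: pos_le_divide_eq)
  then show "w \<in> (\<lambda>p. fst p + snd p *\<^sub>R b) `
      ((span C \<inter> cball 0 R) \<times> {-R / norm b..R / norm b} \<inter> {p. norm (fst p + snd p *\<^sub>R b) \<le> R})"
    using s w \<open>norm s \<le> R\<close> by (intro image_eqI[of _ _ "(s, k)"]) (auto simp: s_def abs_le_iff)
next
  fix w assume "w \<in> (\<lambda>p. fst p + snd p *\<^sub>R b) `
      ((span C \<inter> cball 0 R) \<times> {-R / norm b..R / norm b} \<inter> {p. norm (fst p + snd p *\<^sub>R b) \<le> R})"
  then show "w \<in> span (insert b C) \<inter> cball 0 R"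
    by (auto intro!: span_add span_scale intro: span_base span_mono[THEN subsetD, of C])
qed

lemma compact_span_Int_cball:
  fixes B :: "'a::real_inner set"
  assumes "finite B"
  shows "compact (span B \<inter> cball 0 R)"
proof -
  obtain C where C: "finite C" "span C = span B" "pairwise orthogonal C"
    using basis_orthogonal[OF assms] by blast
  have "compact (span C \<inter> cball 0 R)"
    using C(1,3)
  proof (induction C rule: finite_induct)
    case empty
    then show ?case
      by (simp add: span_empty finite_imp_compact)
  next
    case (insert b C)
    then have IH: "compact (span C \<inter> cball 0 R)"
      by (simp add: pairwise_insert)
    have b_orth: "orthogonal b s" if "s \<in> span C" for s
      using insert.hyps(2) insert.prems that
      by (intro orthogonal_to_span[of s C b]) (auto simp: pairwise_insert)
    show ?case
    proof (cases "b = 0")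
      case True
      then show ?thesis
        using IH by simp
    next
      case False
      have "compact ((span C \<inter> cball 0 R) \<times> {-R / norm b..R / norm b} \<inter> {p. norm (fst p + snd p *\<^sub>R b) \<le> R})"
        by (intro compact_Int_closed compact_Times IH compact_Icc closed_Collect_le continuous_intros)
      then have "compact ((\<lambda>p. fst p + snd p *\<^sub>R b) `
          ((span C \<inter> cball 0 R) \<times> {-R / norm b..R / norm b} \<inter> {p. norm (fst p + snd p *\<^sub>R b) \<le> R}))"
        by (rule compact_continuous_image[rotated]) (intro continuous_intros)
      then show ?thesis
        using span_insert_orthogonal_Int_cball[OF False b_orth, where R = R] by simp
    qed
  qed
  then show ?thesis
    using C(2) by simp
qed

lemma quadratic_form_coercive_on_span:
  fixes A :: "'a::real_inner \<Rightarrow> 'a"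
  assumes "finite B" "bounded_linear A" "\<And>w. w \<in> span B \<Longrightarrow> w \<noteq> 0 \<Longrightarrow> 0 < inner w (A w)"
  obtains \<kappa> where "\<kappa> > 0" "\<And>w. w \<in> span B \<Longrightarrow> \<kappa> * (norm w)\<^sup>2 \<le> inner w (A w)"
proof -
  interpret A: bounded_linear A by fact
  define S where "S = span B \<inter> cball 0 1 \<inter> {v. norm v = 1}"
  have "\<exists>\<kappa>>0. \<forall>v\<in>S. \<kappa> \<le> inner v (A v)"
  proof (cases "S = {}")
    case False
    have "compact S"
      unfolding S_def by (rule compact_Int_closed) (auto intro!: compact_span_Int_cball assms(1) closed_Collect_eq continuous_intros)
    moreover have "continuous_on S (\<lambda>v. inner v (A v))"
      by (intro continuous_intros A.continuous_on)
    ultimately obtain e where e: "e \<in> S" "\<forall>v\<in>S. inner e (A e) \<le> inner v (A v)"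
      using continuous_attains_inf False by blast
    moreover have "e \<noteq> 0"
      using e(1) by (auto simp: S_def)
    ultimately have "0 < inner e (A e)"
      using assms(3)[of e] by (simp add: S_def)
    then show ?thesis
      using e(2) by blast
  qed (auto intro: exI[of _ 1])
  then obtain \<kappa> where \<kappa>: "\<kappa> > 0" "\<And>v. v \<in> S \<Longrightarrow> \<kappa> \<le> inner v (A v)"
    by blast
  have "\<kappa> * (norm w)\<^sup>2 \<le> inner w (A w)" if "w \<in> span B" for w
  proof (cases "w = 0")
    case False
    define v where "v = (1 / norm w) *\<^sub>R w"
    have "v \<in> S"
      using that False by (simp add: S_def v_def span_scale)
    have "w = norm w *\<^sub>R v"
      using False by (simp add: v_def)
    then have "inner w (A w) = (norm w)\<^sup>2 * inner v (A v)"
      using quadratic_form_scaleR[OF A.linear_axioms, of "norm w" v] by simp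
    then show ?thesis
      using mult_right_mono[OF \<kappa>(2)[OF \<open>v \<in> S\<close>], of "(norm w)\<^sup>2"] by (simp add: mult.commute)
  qed (simp add: A.zero)
  then show thesis
    using \<kappa>(1) that by blast
qed

lemma self_adjoint_quadratic_form_eq_0:
  assumes "self_adjoint T" "linear T" "\<And>x. inner x (T x) = 0"
  shows "T x = 0"
proof -
  have "inner (x + T x) (T (x + T x)) = inner x (T x) + 2 * inner (T x) (T x) + inner (T x) (T (T x))"
    using assms(1) by (simp add: linear_add[OF assms(2)] inner_add_left inner_add_right
        self_adjoint_def inner_commute)
  then show ?thesis
    using assms(3) by simp
qed

lemma quadratic_form_le_norm_sq:
  assumes "linear T" "\<And>x. norm x \<le> 1 \<Longrightarrow> inner x (T x) \<le> m"
  shows "inner y (T y) \<le> m * (norm y)\<^sup>2"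
proof (cases "y = 0")
  case True
  then show ?thesis
    by (simp add: linear_0[OF assms(1)])
next
  case False
  define e where "e = (1 / norm y) *\<^sub>R y"
  have "y = norm y *\<^sub>R e"
    using False by (simp add: e_def)
  then have "inner y (T y) = (norm y)\<^sup>2 * inner e (T e)"
    using quadratic_form_scaleR[OF assms(1), of "norm y" e] by simp
  also have "\<dots> \<le> (norm y)\<^sup>2 * m"
    using False assms(2)[of e] by (intro mult_left_mono) (simp_all add: e_def)
  finally show ?thesis
    by (simp add: mult.commute)
qed

lemma positive_op_norm_sq_le:
  assumes "self_adjoint T" "positive_op T" "linear T" "0 < m"
    and "\<And>y. inner y (T y) \<le> m * (norm y)\<^sup>2"
  shows "(norm (T x))\<^sup>2 \<le> m * inner x (T x)"
proof -
  define t where "t = 1 / m"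
  have TTx: "inner x (T (T x)) = (norm (T x))\<^sup>2"
    using assms(1) unfolding self_adjoint_def power2_norm_eq_inner by metis
  have "0 \<le> inner (x - t *\<^sub>R T x) (T (x - t *\<^sub>R T x))"
    using assms(2) by (simp add: positive_op_def)
  also have "\<dots> = inner x (T x) - 2 * t * (norm (T x))\<^sup>2 + t\<^sup>2 * inner (T x) (T (T x))"
    using TTx power2_norm_eq_inner[of "T x"] by (simp add: linear_diff[OF assms(3)] linear_cmul[OF assms(3)] inner_diff_left
        inner_diff_right power2_norm_eq_inner power2_eq_square algebra_simps)
  also have "\<dots> \<le> inner x (T x) - 2 * t * (norm (T x))\<^sup>2 + t\<^sup>2 * (m * (norm (T x))\<^sup>2)"
    using assms(5)[of "T x"] by (simp add: mult_left_mono)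
  also have "\<dots> = inner x (T x) - (norm (T x))\<^sup>2 / m"
    using assms(4) by (simp add: t_def power2_eq_square field_simps)
  finally show ?thesis
    using assms(4) by (simp add: field_simps)
qed

lemma approximate_eigenvector_norm_sq_le:
  assumes "self_adjoint T" "positive_op T" "linear T" "0 < m"
    and "\<And>y. inner y (T y) \<le> m * (norm y)\<^sup>2" and "norm x \<le> 1"
  shows "(norm (T x - m *\<^sub>R x))\<^sup>2 \<le> m * (m - inner x (T x))"
proof -
  have "(norm x)\<^sup>2 \<le> 1"
    using assms(6) by (simp add: abs_square_le_1)
  have "(norm (T x - m *\<^sub>R x))\<^sup>2 = (norm (T x))\<^sup>2 - 2 * m * inner x (T x) + m\<^sup>2 * (norm x)\<^sup>2"
    unfolding power2_norm_eq_inner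
    by (simp add: inner_diff_left inner_diff_right algebra_simps power2_eq_square inner_commute)
  also have "\<dots> \<le> m * inner x (T x) - 2 * m * inner x (T x) + m\<^sup>2 * 1"
    using positive_op_norm_sq_le[OF assms(1-5)] \<open>(norm x)\<^sup>2 \<le> 1\<close> assms(4)
    by (intro add_mono diff_mono mult_left_mono) auto
  finally show ?thesis
    by (simp add: algebra_simps power2_eq_square)
qed

lemma eigenvector_of_approximate_eigenvectors:
  fixes T :: "'a::real_normed_vector \<Rightarrow> 'a"
  assumes "bounded_linear T" "compact K" "\<And>n. T (x n) \<in> K"
    and "(\<lambda>n. T (x n) - m *\<^sub>R x n) \<longlonglongrightarrow> 0" "m \<noteq> 0"
    and "0 < a" "\<And>n. a \<le> norm (T (x n))"
  obtains z where "z \<noteq> 0" "T z = m *\<^sub>R z"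
proof -
  interpret T: bounded_linear T by fact
  obtain l r where r: "strict_mono r" and "((\<lambda>n. T (x n)) \<circ> r) \<longlonglongrightarrow> l"
    using seq_compactE[OF compact_imp_seq_compact[OF assms(2)], of "\<lambda>n. T (x n)"] assms(3) by blast
  then have l: "(\<lambda>n. T (x (r n))) \<longlonglongrightarrow> l"
    by (simp add: comp_def)
  have "(\<lambda>n. T (x (r n)) - m *\<^sub>R x (r n)) \<longlonglongrightarrow> 0"
    using LIMSEQ_subseq_LIMSEQ[OF assms(4) r] by (simp add: comp_def)
  then have "(\<lambda>n. (1 / m) *\<^sub>R (T (x (r n)) - (T (x (r n)) - m *\<^sub>R x (r n)))) \<longlonglongrightarrow> (1 / m) *\<^sub>R (l - 0)"
    by (intro tendsto_scaleR tendsto_const tendsto_diff l)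
  then have "(\<lambda>n. x (r n)) \<longlonglongrightarrow> (1 / m) *\<^sub>R l"
    using assms(5) by simp
  then have "(\<lambda>n. T (x (r n))) \<longlonglongrightarrow> T ((1 / m) *\<^sub>R l)"
    by (rule T.tendsto)
  then have Tz: "T ((1 / m) *\<^sub>R l) = l"
    using l by (rule LIMSEQ_unique)
  have "a \<le> norm l"
    by (rule LIMSEQ_le_const[OF tendsto_norm[OF l]]) (use assms(7) in blast)
  then show thesis
    using assms(5,6) Tz by (intro that[of "(1 / m) *\<^sub>R l"]) auto
qed

lemma bdd_above_quadratic_form_cball:
  assumes "bounded_linear T"
  shows "bdd_above ((\<lambda>y. inner y (T y)) ` cball 0 1)"
proof -
  interpret T: bounded_linear T by fact
  obtain K where K: "\<And>y. norm (T y) \<le> norm y * K" "K > 0"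
    using T.pos_bounded by blast
  have "inner y (T y) \<le> K" if "norm y \<le> 1" for y
  proof -
    have "inner y (T y) \<le> norm y * norm (T y)"
      by (rule norm_cauchy_schwarz)
    also have "\<dots> \<le> norm (T y)"
      using that by (simp add: mult_left_le_one_le)
    also have "\<dots> \<le> norm y * K"
      by (rule K(1))
    also have "\<dots> \<le> K"
      using that K(2) by (simp add: mult_left_le_one_le)
    finally show ?thesis .
  qed
  then show ?thesis
    by (intro bdd_aboveI2[where M = K]) simp
qed

lemma quadratic_form_le_SUP_cball:
  assumes "bounded_linear T"
  shows "inner x (T x) \<le> (SUP y\<in>cball 0 1. inner y (T y)) * (norm x)\<^sup>2"
  using bdd_above_quadratic_form_cball[OF assms]
  by (intro quadratic_form_le_norm_sq bounded_linear.linear[OF assms] cSUP_upper) auto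

lemma cSUP_approximating_sequence:
  fixes f :: "'b \<Rightarrow> real"
  assumes "A \<noteq> {}" "bdd_above (f ` A)" "\<And>n. 0 < e n"
  obtains xs where "\<And>n. xs n \<in> A" "\<And>n. (SUP x\<in>A. f x) - e n < f (xs n)"
proof -
  have "\<exists>x\<in>A. (SUP x\<in>A. f x) - e n < f x" for n
    using less_cSUP_iff[OF assms(1,2), of "(SUP x\<in>A. f x) - e n"] assms(3)[of n] by simp
  then have "\<forall>n. \<exists>x. x \<in> A \<and> (SUP x\<in>A. f x) - e n < f x"
    by blast
  then have "\<exists>xs. \<forall>n. xs n \<in> A \<and> (SUP x\<in>A. f x) - e n < f (xs n)"
    by (rule choice)
  then show thesis
    using that by blast
qed

lemma approximate_eigenvectors_exist:
  fixes T :: "'a::real_inner \<Rightarrow> 'a"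
  defines "M \<equiv> SUP y\<in>cball 0 1. inner y (T y)"
  assumes "bounded_linear T" "self_adjoint T" "positive_op T" "0 < M"
  obtains xs where "\<And>n. norm (xs n) \<le> 1" "(\<lambda>n. T (xs n) - M *\<^sub>R xs n) \<longlonglongrightarrow> 0"
    "\<And>n. M / 2 \<le> norm (T (xs n))"
proof -
  define e where "e n = M / 2 * inverse (real (Suc n))" for n
  have e: "e n > 0" "e n \<le> M / 2" for n
    using assms(5) by (simp_all add: e_def mult_left_le_one_le inverse_le_1_iff)
  obtain xs where "\<And>n. xs n \<in> cball 0 1" "\<And>n. M - e n < inner (xs n) (T (xs n))"
    using cSUP_approximating_sequence[where A = "cball 0 1" and f = "\<lambda>y. inner y (T y)" and e = e,
        OF _ bdd_above_quadratic_form_cball[OF assms(2)] e(1)]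
    unfolding M_def by auto
  then have xs: "\<And>n. norm (xs n) \<le> 1" "\<And>n. M - e n < inner (xs n) (T (xs n))"
    by simp_all
  have qM: "inner y (T y) \<le> M * (norm y)\<^sup>2" for y
    using quadratic_form_le_SUP_cball[OF assms(2)] by (simp add: M_def)
  have bound: "norm (T (xs n) - M *\<^sub>R xs n) \<le> sqrt (M * e n)" for n
  proof -
    have "(norm (T (xs n) - M *\<^sub>R xs n))\<^sup>2 \<le> M * (M - inner (xs n) (T (xs n)))"
      by (rule approximate_eigenvector_norm_sq_le[OF assms(3,4) bounded_linear.linear[OF assms(2)]
            assms(5) qM xs(1)])
    also have "\<dots> \<le> M * e n"
      using xs(2)[of n] assms(5) by (intro mult_left_mono) auto
    finally show ?thesis
      by (simp add: real_le_rsqrt)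
  qed
  have sqrt_lim: "(\<lambda>n. sqrt (M * e n)) \<longlonglongrightarrow> 0"
    unfolding e_def using tendsto_real_sqrt[OF tendsto_mult_right_zero[OF
          tendsto_mult_right_zero[OF LIMSEQ_inverse_real_of_nat]], of M "M / 2"] by simp
  have "(\<lambda>n. norm (T (xs n) - M *\<^sub>R xs n)) \<longlonglongrightarrow> 0"
    by (intro tendsto_sandwich[OF always_eventually always_eventually tendsto_const sqrt_lim])
      (simp_all add: bound)
  then have approx: "(\<lambda>n. T (xs n) - M *\<^sub>R xs n) \<longlonglongrightarrow> 0"
    by (rule tendsto_norm_zero_cancel)
  have lower: "M / 2 \<le> norm (T (xs n))" for n
  proof -
    have "inner (xs n) (T (xs n)) \<le> norm (xs n) * norm (T (xs n))"
      by (rule norm_cauchy_schwarz)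
    also have "\<dots> \<le> norm (T (xs n))"
      using xs(1)[of n] by (simp add: mult_left_le_one_le)
    finally show ?thesis
      using xs(2)[of n] e(2)[of n] by linarith
  qed
  show thesis
    by (rule that[OF xs(1) approx lower])
qed

lemma compact_op_has_eigenfunction:
  fixes T :: "'a::real_inner \<Rightarrow> 'a" and x :: 'a
  assumes "compact_op T" "self_adjoint T" "positive_op T" "x \<noteq> 0"
  obtains u where "eigenfunction T u"
proof (cases "\<forall>y. T y = 0")
  case True
  then have "eigenfunction T x"
    using assms(4) by (auto simp: eigenfunction_def intro: exI[of _ 0])
  then show thesis ..
next
  case False
  have T: "bounded_linear T" "compact (closure (T ` cball 0 1))"
    using assms(1) by (simp_all add: compact_op_def)
  define M where "M = (SUP y\<in>cball 0 1. inner y (T y))"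
  have "M > 0"
  proof (rule ccontr)
    assume "\<not> M > 0"
    then have "inner y (T y) \<le> 0" for y
      using quadratic_form_le_SUP_cball[OF T(1), of y] mult_nonpos_nonneg[of M "(norm y)\<^sup>2"]
      by (simp add: M_def)
    then have "inner y (T y) = 0" for y
      using assms(3) by (simp add: positive_op_def antisym)
    then show False
      using False self_adjoint_quadratic_form_eq_0[OF assms(2) bounded_linear.linear[OF T(1)]] by simp
  qed
  then obtain xs where xs: "\<And>n. norm (xs n) \<le> 1" "(\<lambda>n. T (xs n) - M *\<^sub>R xs n) \<longlonglongrightarrow> 0"
    "\<And>n. M / 2 \<le> norm (T (xs n))"
    using approximate_eigenvectors_exist[OF T(1) assms(2,3)] unfolding M_def by blast
  have "T (xs n) \<in> closure (T ` cball 0 1)" for n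
    using xs(1)[of n] by (intro closure_subset[THEN subsetD] imageI) simp
  then obtain z where "z \<noteq> 0" "T z = M *\<^sub>R z"
    using eigenvector_of_approximate_eigenvectors[OF T(1,2) _ xs(2) _ _ xs(3)] \<open>M > 0\<close> by auto
  then show thesis
    using that by (auto simp: eigenfunction_def)
qed

lemma bounded_linear_blk:
  assumes "bounded_linear G"
  shows "bounded_linear (blk11 G)" "bounded_linear (blk12 G)" "bounded_linear (blk22 G)"
proof -
  have "bounded_linear (\<lambda>u. G (u, 0))"
    using bounded_linear_compose[OF assms bounded_linear_Pair[OF bounded_linear_ident bounded_linear_zero]] .
  moreover have "bounded_linear (\<lambda>v. G (0, v))"
    using bounded_linear_compose[OF assms bounded_linear_Pair[OF bounded_linear_zero bounded_linear_ident]] .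
  ultimately show "bounded_linear (blk11 G)" "bounded_linear (blk12 G)" "bounded_linear (blk22 G)"
    unfolding blk11_def[abs_def] blk12_def[abs_def] blk22_def[abs_def]
    by (auto dest: bounded_linear_compose[OF bounded_linear_fst] bounded_linear_compose[OF bounded_linear_snd])
qed

lemma compact_op_blk11:
  assumes "compact_op G"
  shows "compact_op (blk11 G)"
proof -
  have "blk11 G ` cball 0 1 \<subseteq> fst ` closure (G ` cball 0 1)"
    by (auto simp: blk11_def norm_Pair intro!: imageI closure_subset[THEN subsetD])
  moreover have K: "compact (fst ` closure (G ` cball 0 1))"
    using assms unfolding compact_op_def
    by (intro compact_continuous_image continuous_on_fst continuous_on_id) auto
  ultimately have "closure (blk11 G ` cball 0 1) \<subseteq> fst ` closure (G ` cball 0 1)"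
    by (intro closure_minimal compact_imp_closed)
  then have "compact (closure (blk11 G ` cball 0 1))"
    using compact_Int_closed[OF K closed_closure[of "blk11 G ` cball 0 1"]] by (simp add: Int_absorb1)
  then show ?thesis
    using assms bounded_linear_blk(1)[of G] by (simp add: compact_op_def)
qed

lemma self_adjoint_blk11:
  assumes "self_adjoint G"
  shows "self_adjoint (blk11 G)"
  unfolding self_adjoint_def
proof (intro allI)
  fix x y
  have "inner (G (x, 0)) (y, 0) = inner (x, 0) (G (y, 0))"
    using assms by (simp add: self_adjoint_def)
  then show "inner (blk11 G x) y = inner x (blk11 G y)"
    by (simp add: blk11_def inner_prod_def)
qed

lemma positive_op_blk11:
  assumes "positive_op G"
  shows "positive_op (blk11 G)"
  unfolding positive_op_def
proof
  fix x
  have "0 \<le> inner (x, 0) (G (x, 0))"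
    using assms by (simp add: positive_op_def)
  then show "0 \<le> inner x (blk11 G x)"
    by (simp add: blk11_def inner_prod_def)
qed

definition penalized_sphere :: "('a::real_inner \<Rightarrow> real) \<Rightarrow> 'a set \<Rightarrow> ('a \<Rightarrow> 'a) \<Rightarrow> real \<Rightarrow> 'a set"
  where "penalized_sphere Q Hs D t = {u \<in> Hs. Q u + t * Psi D u = 1}"

lemma Psi_nonneg: "0 \<le> Psi D u"
  by (simp add: Psi_def rough_def)

lemma nullsp_eq: "nullsp Hs D = {u \<in> Hs. D u = 0}"
  by (auto simp: nullsp_def rough_def)

lemma linear_on_scaleR: "linear_on Hs D \<Longrightarrow> u \<in> Hs \<Longrightarrow> D (a *\<^sub>R u) = a *\<^sub>R D u"
  unfolding linear_on_def by (metis scale_zero_left add.right_neutral)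

lemma sq_scaleR_if_quadratic_form:
  assumes "linear A" "\<And>u. (s u)\<^sup>2 = c * inner u (A u)"
  shows "(s (a *\<^sub>R u))\<^sup>2 = a\<^sup>2 * (s u)\<^sup>2"
  using quadratic_form_scaleR[OF assms(1)] by (simp add: assms(2) mult.left_commute)

lemma penalized_sphere_nonempty:
  assumes "subspace Hs" "linear_on Hs D" "h \<in> Hs" "0 < t"
    and "\<And>a. Q (a *\<^sub>R h) = a\<^sup>2 * Q h" "0 \<le> Q h" "h \<in> nullsp Hs D \<Longrightarrow> Q h \<noteq> 0"
  shows "penalized_sphere Q Hs D t \<noteq> {}"
proof -
  define V where "V = Q h + t * Psi D h"
  have "V > 0"
  proof (rule ccontr)
    assume "\<not> V > 0"
    moreover have "0 \<le> t * Psi D h"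
      using assms(4) Psi_nonneg[of D h] by simp
    ultimately have "Q h = 0" "t * Psi D h = 0"
      using assms(6) unfolding V_def by linarith+
    then have "Q h = 0" "Psi D h = 0"
      using assms(4) by simp_all
    then show False
      using assms(3,7) by (simp add: nullsp_eq Psi_def rough_def)
  qed
  define a where "a = 1 / sqrt V"
  have "Q (a *\<^sub>R h) + t * Psi D (a *\<^sub>R h) = a\<^sup>2 * V"
    using assms(2,3,5) by (simp add: linear_on_scaleR Psi_def rough_def V_def power2_eq_square algebra_simps)
  also have "\<dots> = 1"
    using \<open>V > 0\<close> by (simp add: a_def power_divide)
  finally show ?thesis
    using assms(1,3) by (auto simp: penalized_sphere_def intro!: subspace_scale)
qed

lemma nullsp_orthogonal_decomposition:
  assumes "subspace Hs" "linear_on Hs D" "finite B" "nullsp Hs D = span B" "u \<in> Hs"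
  obtains y z where "y \<in> nullsp Hs D" "z \<in> orth_compl (nullsp Hs D) \<inter> Hs" "u = y + z"
    "Psi D u = Psi D z"
proof -
  obtain y where y: "y \<in> span B" "\<And>w. w \<in> span B \<Longrightarrow> orthogonal (u - y) w"
    using orthogonal_projection_span_exists[OF assms(3)] by blast
  then have "y \<in> Hs" "D y = 0"
    using assms(4) by (auto simp: nullsp_eq)
  moreover have "u - y \<in> Hs"
    using assms(1,5) \<open>y \<in> Hs\<close> by (rule subspace_diff)
  ultimately have "D u = 1 *\<^sub>R D (u - y) + 1 *\<^sub>R D y"
    using assms(2) unfolding linear_on_def by (metis diff_add_cancel scaleR_one)
  then have "D u = D (u - y)"
    using \<open>D y = 0\<close> by simp
  then show thesis
    using y assms(4) \<open>u - y \<in> Hs\<close>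
    by (intro that[of y "u - y"]) (auto simp: orth_compl_def orthogonal_def Psi_def rough_def)
qed

lemma quadratic_form_diff_le:
  assumes "linear A" "\<And>w. 0 \<le> inner w (A w)"
  shows "inner (u - z) (A (u - z)) \<le> 2 * inner u (A u) + 2 * inner z (A z)"
proof -
  have "inner (u - z) (A (u - z)) + inner (u + z) (A (u + z)) = 2 * inner u (A u) + 2 * inner z (A z)"
    by (simp add: linear_diff[OF assms(1)] linear_add[OF assms(1)] inner_diff_left inner_diff_right
        inner_add_left inner_add_right)
  then show ?thesis
    using assms(2)[of "u + z"] by linarith
qed

lemma penalized_sphere_point_bound:
  fixes A :: "'a::real_inner \<Rightarrow> 'a"
  assumes A: "linear A" "\<And>w. 0 \<le> inner w (A w)" "\<And>x. norm (A x) \<le> norm x * K" "0 \<le> K"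
    and t: "0 < t" "t \<le> 1"
    and u: "inner u (A u) + t * Psi D z = 1" "u = y + z" "orthogonal y z"
    and d: "0 < d" "z \<noteq> 0 \<Longrightarrow> d * (norm z)\<^sup>2 < Psi D z"
    and \<kappa>: "0 < \<kappa>" "\<kappa> * (norm y)\<^sup>2 \<le> inner y (A y)"
  shows "t * (norm u)\<^sup>2 \<le> (2 + 2 * K / d) / \<kappa> + 1 / d"
proof -
  have "t * (d * (norm z)\<^sup>2) \<le> t * Psi D z"
    using d(2) t(1) by (cases "z = 0") (simp_all add: Psi_nonneg)
  also have "\<dots> \<le> 1"
    using u(1) A(2)[of u] by linarith
  finally have z_bound: "t * (norm z)\<^sup>2 \<le> 1 / d"
    using d(1) by (simp add: field_simps)
  have "inner z (A z) \<le> K * (norm z)\<^sup>2"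
    using norm_cauchy_schwarz[of z "A z"] mult_left_mono[OF A(3)[of z] norm_ge_zero[of z]]
    by (simp add: power2_eq_square mult_ac)
  then have "t * inner z (A z) \<le> K * (t * (norm z)\<^sup>2)"
    using t(1) by (simp add: mult_left_mono mult.left_commute)
  also have "\<dots> \<le> K / d"
    using mult_left_mono[OF z_bound A(4)] by simp
  finally have Qz: "t * inner z (A z) \<le> K / d" .
  have Qu: "t * inner u (A u) \<le> 1"
    using mult_left_le_one_le[OF A(2)[of u] less_imp_le[OF t(1)] t(2)] u(1)
      mult_nonneg_nonneg[OF less_imp_le[OF t(1)] Psi_nonneg[of D z]] by linarith
  have "t * (\<kappa> * (norm y)\<^sup>2) \<le> t * inner y (A y)"
    using \<kappa>(2) t(1) by simp
  also have "\<dots> \<le> t * (2 * inner u (A u) + 2 * inner z (A z))"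
    using quadratic_form_diff_le[OF A(1,2), of u z] u(2) t(1) by simp
  also have "\<dots> = 2 * (t * inner u (A u)) + 2 * (t * inner z (A z))"
    by (simp add: algebra_simps)
  also have "\<dots> \<le> 2 + 2 * K / d"
    using Qu Qz by linarith
  finally have "t * (norm y)\<^sup>2 \<le> (2 + 2 * K / d) / \<kappa>"
    using \<kappa>(1) by (simp add: field_simps)
  moreover have "(norm u)\<^sup>2 = (norm y)\<^sup>2 + (norm z)\<^sup>2"
    using u(2,3) norm_add_Pythagorean by blast
  ultimately show ?thesis
    using z_bound by (simp add: distrib_left)
qed

lemma penalized_sphere_norm_bound:
  fixes A D :: "'a::real_inner \<Rightarrow> 'a"
  assumes A: "bounded_linear A" "\<And>u. (s u)\<^sup>2 = c * inner u (A u)"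
    and Hs: "subspace Hs" "linear_on Hs D"
    and definite: "\<forall>u\<in>nullsp Hs D. u \<noteq> 0 \<longrightarrow> s u \<noteq> 0"
    and N: "\<exists>B. finite B \<and> nullsp Hs D = span B"
    and coercive: "\<exists>d>0. \<forall>u\<in>orth_compl (nullsp Hs D) \<inter> Hs. u \<noteq> 0 \<longrightarrow> Psi D u > d * (norm u)\<^sup>2"
  obtains C where
    "\<And>t u. 0 < t \<Longrightarrow> t \<le> 1 \<Longrightarrow> u \<in> penalized_sphere (\<lambda>u. (s u)\<^sup>2) Hs D t \<Longrightarrow> (norm u)\<^sup>2 \<le> C / t"
proof -
  define A' where "A' = (\<lambda>u. c *\<^sub>R A u)"
  have A'_bl: "bounded_linear A'"
    unfolding A'_def by (rule bounded_linear_compose[OF bounded_linear_scaleR_right A(1)])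
  have A'_sq: "inner u (A' u) = (s u)\<^sup>2" for u
    by (simp add: A'_def A(2))
  obtain B where B: "finite B" "nullsp Hs D = span B"
    using N by blast
  obtain d where d: "d > 0" "\<And>z. z \<in> orth_compl (nullsp Hs D) \<inter> Hs \<Longrightarrow> z \<noteq> 0 \<Longrightarrow> Psi D z > d * (norm z)\<^sup>2"
    using coercive by blast
  obtain K where K: "K > 0" "\<And>x. norm (A' x) \<le> norm x * K"
    using bounded_linear.pos_bounded[OF A'_bl] by blast
  have A'_pos: "0 < inner w (A' w)" if "w \<in> span B" "w \<noteq> 0" for w
  proof -
    have "s w \<noteq> 0"
      using definite B(2) that by blast
    then show ?thesis
      by (simp add: A'_sq)
  qed
  obtain \<kappa> where \<kappa>: "\<kappa> > 0" "\<And>w. w \<in> span B \<Longrightarrow> \<kappa> * (norm w)\<^sup>2 \<le> inner w (A' w)"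
    using quadratic_form_coercive_on_span[OF B(1) A'_bl A'_pos] by blast
  define C where "C = (2 + 2 * K / d) / \<kappa> + 1 / d"
  show thesis
  proof (rule that)
    fix t u
    assume t: "0 < t" "t \<le> 1" and u: "u \<in> penalized_sphere (\<lambda>u. (s u)\<^sup>2) Hs D t"
    obtain y z where yz: "y \<in> nullsp Hs D" "z \<in> orth_compl (nullsp Hs D) \<inter> Hs" "u = y + z"
      "Psi D u = Psi D z"
      using nullsp_orthogonal_decomposition[OF Hs B] u by (auto simp: penalized_sphere_def)
    have eq: "inner u (A' u) + t * Psi D z = 1"
      using u yz(4) by (simp add: penalized_sphere_def A'_sq)
    have orth: "orthogonal y z"
      using yz(1,2) by (simp add: orth_compl_def orthogonal_def inner_commute)
    have y_bound: "\<kappa> * (norm y)\<^sup>2 \<le> inner y (A' y)"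
      using \<kappa>(2)[of y] yz(1) B(2) by simp
    have "t * (norm u)\<^sup>2 \<le> C"
      unfolding C_def
      by (rule penalized_sphere_point_bound[OF bounded_linear.linear[OF A'_bl] _ K(2) less_imp_le[OF K(1)]
            t eq yz(3) orth d(1) d(2)[OF yz(2)] \<kappa>(1) y_bound]) (simp add: A'_sq)
    then show "(norm u)\<^sup>2 \<le> C / t"
      using t(1) by (simp add: pos_le_divide_eq mult.commute)
  qed
qed

lemma SUP_tendsto_zero_by_scaling:
  fixes F :: "nat \<Rightarrow> 'x \<Rightarrow> real"
  assumes nonneg: "\<And>n u. 0 \<le> F n u" and nonempty: "\<And>n. S n \<noteq> {}"
    and scaling: "\<forall>\<^sub>F n in sequentially. \<forall>u\<in>S n. \<exists>e\<in>U. \<exists>l. 0 \<le> l \<and> l \<le> C / \<tau> n \<and> F n u = l * F n e"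
    and majorant: "\<And>n. (SUP e\<in>U. ereal (F n e)) \<le> m n"
    and rate: "(\<lambda>n. ereal (1 / \<tau> n) * m n) \<longlonglongrightarrow> 0"
  shows "(\<lambda>n. SUP u\<in>S n. ereal (F n u)) \<longlonglongrightarrow> 0"
proof (rule tendsto_sandwich[of "\<lambda>_. 0" _ _ "\<lambda>n. ereal C * (ereal (1 / \<tau> n) * m n)"])
  show "\<forall>\<^sub>F n in sequentially. 0 \<le> (SUP u\<in>S n. ereal (F n u))"
  proof (intro always_eventually allI)
    fix n
    obtain u where "u \<in> S n"
      using nonempty by blast
    then show "0 \<le> (SUP u\<in>S n. ereal (F n u))"
      using nonneg by (intro SUP_upper2[of u]) auto
  qed
  show "\<forall>\<^sub>F n in sequentially. (SUP u\<in>S n. ereal (F n u)) \<le> ereal C * (ereal (1 / \<tau> n) * m n)"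
    using scaling
  proof (rule eventually_mono)
    fix n
    assume scale_n: "\<forall>u\<in>S n. \<exists>e\<in>U. \<exists>l. 0 \<le> l \<and> l \<le> C / \<tau> n \<and> F n u = l * F n e"
    show "(SUP u\<in>S n. ereal (F n u)) \<le> ereal C * (ereal (1 / \<tau> n) * m n)"
    proof (rule SUP_least)
      fix u assume "u \<in> S n"
      then obtain e l where el: "e \<in> U" "0 \<le> l" "l \<le> C / \<tau> n" "F n u = l * F n e"
        using scale_n by blast
      have "ereal (F n u) = ereal l * ereal (F n e)"
        using el(4) by simp
      also have "\<dots> \<le> ereal (C / \<tau> n) * ereal (F n e)"
        using el(3) nonneg by (intro ereal_mult_right_mono) auto
      also have "\<dots> \<le> ereal (C / \<tau> n) * m n"
      proof (rule ereal_mult_left_mono)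
        show "ereal (F n e) \<le> m n"
          using SUP_upper[OF el(1)] majorant[of n] by (rule order.trans)
      qed (use el(2,3) in simp)
      finally show "ereal (F n u) \<le> ereal C * (ereal (1 / \<tau> n) * m n)"
        by (simp add: mult.assoc[symmetric])
    qed
  qed
  show "(\<lambda>n. ereal C * (ereal (1 / \<tau> n) * m n)) \<longlonglongrightarrow> 0"
    using tendsto_cmult_ereal[OF _ rate, of "ereal C"] by simp
qed simp

lemma unit_vector_decomposition:
  fixes x u :: "'a::real_normed_vector"
  assumes "norm x = 1"
  obtains e where "norm e = 1" "u = norm u *\<^sub>R e"
proof (cases "u = 0")
  case True
  then show thesis
    using assms that by simp
next
  case False
  then show thesis
    by (intro that[of "(1 / norm u) *\<^sub>R u"]) simp_all
qed

lemma SUP_tendsto_zero_quadratic: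
  fixes F :: "nat \<Rightarrow> 'a::real_normed_vector \<Rightarrow> real" and x :: 'a
  assumes "\<And>n u. 0 \<le> F n u" "\<And>n. S n \<noteq> {}" "norm x = 1"
    and "\<forall>\<^sub>F n in sequentially. (\<forall>a u. F n (a *\<^sub>R u) = a\<^sup>2 * F n u) \<and> (\<forall>u\<in>S n. (norm u)\<^sup>2 \<le> C / \<tau> n)"
    and "\<And>n. (SUP e\<in>{e. norm e = 1}. ereal (F n e)) \<le> m n" "(\<lambda>n. ereal (1 / \<tau> n) * m n) \<longlonglongrightarrow> 0"
  shows "(\<lambda>n. SUP u\<in>S n. ereal (F n u)) \<longlonglongrightarrow> 0"
proof (rule SUP_tendsto_zero_by_scaling[OF assms(1,2) _ assms(5,6)])
  show "\<forall>\<^sub>F n in sequentially. \<forall>u\<in>S n. \<exists>e\<in>{e. norm e = 1}. \<exists>l. 0 \<le> l \<and> l \<le> C / \<tau> n \<and> F n u = l * F n e"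
    using assms(4)
  proof (rule eventually_mono, intro ballI)
    fix n u
    assume hom_bound: "(\<forall>a u. F n (a *\<^sub>R u) = a\<^sup>2 * F n u) \<and> (\<forall>u\<in>S n. (norm u)\<^sup>2 \<le> C / \<tau> n)"
      and "u \<in> S n"
    obtain e where e: "norm e = 1" "u = norm u *\<^sub>R e"
      using unit_vector_decomposition[of x u, OF assms(3)] .
    have "F n u = (norm u)\<^sup>2 * F n e"
      using arg_cong[where f = "F n", OF e(2)] hom_bound by simp
    then show "\<exists>e\<in>{e. norm e = 1}. \<exists>l. 0 \<le> l \<and> l \<le> C / \<tau> n \<and> F n u = l * F n e"
      using e(1) hom_bound \<open>u \<in> S n\<close> by (intro bexI[of _ e] exI[of _ "(norm u)\<^sup>2"]) auto
  qed
qed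

lemma SUP_tendsto_zero_bilinear:
  fixes F :: "nat \<Rightarrow> 'a::real_normed_vector \<Rightarrow> 'b::real_normed_vector \<Rightarrow> real"
    and x :: 'a and y :: 'b
  assumes "\<And>n u v. 0 \<le> F n u v" "\<And>n. S n \<noteq> {}" "norm x = 1" "norm y = 1"
    and "\<forall>\<^sub>F n in sequentially. (\<forall>a b u v. F n (a *\<^sub>R u) (b *\<^sub>R v) = \<bar>a * b\<bar> * F n u v) \<and>
           (\<forall>(u, v)\<in>S n. (norm u)\<^sup>2 \<le> C / \<tau> n \<and> (norm v)\<^sup>2 \<le> C / \<tau> n)"
    and "\<And>n. (SUP (e, f)\<in>{(e, f). norm e = 1 \<and> norm f = 1}. ereal (F n e f)) \<le> m n"
    and "(\<lambda>n. ereal (1 / \<tau> n) * m n) \<longlonglongrightarrow> 0"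
  shows "(\<lambda>n. SUP (u, v)\<in>S n. ereal (F n u v)) \<longlonglongrightarrow> 0"
proof -
  have "(\<lambda>n. SUP p\<in>S n. ereal (F n (fst p) (snd p))) \<longlonglongrightarrow> 0"
  proof (rule SUP_tendsto_zero_by_scaling)
    show "\<forall>\<^sub>F n in sequentially. \<forall>p\<in>S n. \<exists>q\<in>{(e, f). norm e = 1 \<and> norm f = 1}.
            \<exists>l. 0 \<le> l \<and> l \<le> C / \<tau> n \<and> F n (fst p) (snd p) = l * F n (fst q) (snd q)"
      using assms(5)
    proof (rule eventually_mono, intro ballI)
      fix n p
      assume hom_bound: "(\<forall>a b u v. F n (a *\<^sub>R u) (b *\<^sub>R v) = \<bar>a * b\<bar> * F n u v) \<and>
             (\<forall>(u, v)\<in>S n. (norm u)\<^sup>2 \<le> C / \<tau> n \<and> (norm v)\<^sup>2 \<le> C / \<tau> n)"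
        and "p \<in> S n"
      obtain u v where p: "p = (u, v)"
        by fastforce
      obtain e where e: "norm e = 1" "u = norm u *\<^sub>R e"
        using unit_vector_decomposition[of x u, OF assms(3)] .
      obtain f where f: "norm f = 1" "v = norm v *\<^sub>R f"
        using unit_vector_decomposition[of y v, OF assms(4)] .
      have "F n u v = (norm u * norm v) * F n e f"
        using arg_cong2[where f = "F n", OF e(2) f(2)] hom_bound by simp
      moreover have "norm u * norm v \<le> ((norm u)\<^sup>2 + (norm v)\<^sup>2) / 2"
        using sum_squares_bound[of "norm u" "norm v"] by (simp add: power2_eq_square)
      moreover have "(norm u)\<^sup>2 \<le> C / \<tau> n" "(norm v)\<^sup>2 \<le> C / \<tau> n"
        using hom_bound \<open>p \<in> S n\<close> p by auto
      ultimately show "\<exists>q\<in>{(e, f). norm e = 1 \<and> norm f = 1}.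
          \<exists>l. 0 \<le> l \<and> l \<le> C / \<tau> n \<and> F n (fst p) (snd p) = l * F n (fst q) (snd q)"
        using e(1) f(1) p by (intro bexI[of _ "(e, f)"] exI[of _ "norm u * norm v"]) auto
    qed
  qed (use assms(1,2,6,7) in \<open>simp_all add: split_def\<close>)
  then show ?thesis
    by (simp add: split_def)
qed

lemma emp_sig_sq_error_scaleR:
  assumes "scale_functional \<sigma>R" "0 < n" "(s (a *\<^sub>R u))\<^sup>2 = a\<^sup>2 * (s u)\<^sup>2"
  shows "\<bar>(emp_sig \<sigma>R X n \<omega> (a *\<^sub>R u))\<^sup>2 - (s (a *\<^sub>R u))\<^sup>2\<bar> = a\<^sup>2 * \<bar>(emp_sig \<sigma>R X n \<omega> u)\<^sup>2 - (s u)\<^sup>2\<bar>"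
proof -
  have "(emp_sig \<sigma>R X n \<omega> (a *\<^sub>R u))\<^sup>2 = a\<^sup>2 * (emp_sig \<sigma>R X n \<omega> u)\<^sup>2"
    by (simp add: emp_sig_scaleR[OF assms(1,2)] power_mult_distrib)
  then show ?thesis
    by (simp only: assms(3) right_diff_distrib[symmetric] abs_mult abs_power2)
qed

lemma emp_gam_error_scaleR:
  assumes "coassoc_functional \<gamma>R" "0 < n" "g (a *\<^sub>R u) (b *\<^sub>R v) = a * b * g u v"
  shows "\<bar>emp_gam \<gamma>R X Y n \<omega> (a *\<^sub>R u) (b *\<^sub>R v) - g (a *\<^sub>R u) (b *\<^sub>R v)\<bar>
    = \<bar>a * b\<bar> * \<bar>emp_gam \<gamma>R X Y n \<omega> u v - g u v\<bar>"
  by (simp only: emp_gam_scaleR[OF assms(1,2)] assms(3) right_diff_distrib[symmetric] abs_mult)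

lemma AE_SUP_sig_error_tendsto_zero:
  fixes s :: "'h::real_inner \<Rightarrow> real" and x :: 'h
  assumes "scale_functional \<sigma>R" "\<And>a u. (s (a *\<^sub>R u))\<^sup>2 = a\<^sup>2 * (s u)\<^sup>2" "norm x = 1"
    and "\<And>n. S n \<noteq> {}" "\<forall>\<^sub>F n in sequentially. 0 < n \<and> (\<forall>u\<in>S n. (norm u)\<^sup>2 \<le> C / \<tau> n)"
    and "AE \<omega> in M. (\<lambda>n. ereal (1 / \<tau> n) * m n \<omega>) \<longlonglongrightarrow> 0"
    and "\<And>n \<omega>. (SUP u\<in>{u. norm u = 1}. ereal \<bar>(emp_sig \<sigma>R X n \<omega> u)\<^sup>2 - (s u)\<^sup>2\<bar>) \<le> m n \<omega>"
  shows "AE \<omega> in M. (\<lambda>n. SUP u\<in>S n. ereal \<bar>(emp_sig \<sigma>R X n \<omega> u)\<^sup>2 - (s u)\<^sup>2\<bar>) \<longlonglongrightarrow> 0"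
  using assms(6)
proof (rule eventually_mono)
  fix \<omega>
  assume rate: "(\<lambda>n. ereal (1 / \<tau> n) * m n \<omega>) \<longlonglongrightarrow> 0"
  show "(\<lambda>n. SUP u\<in>S n. ereal \<bar>(emp_sig \<sigma>R X n \<omega> u)\<^sup>2 - (s u)\<^sup>2\<bar>) \<longlonglongrightarrow> 0"
    by (rule SUP_tendsto_zero_quadratic[OF _ assms(4,3) eventually_mono[OF assms(5)] assms(7) rate])
      (auto simp: emp_sig_sq_error_scaleR[where s = s, OF assms(1) _ assms(2)])
qed

lemma AE_SUP_gam_error_tendsto_zero:
  fixes g :: "'h::real_inner \<Rightarrow> 'h \<Rightarrow> real" and x :: 'h
  assumes "coassoc_functional \<gamma>R" "\<And>a b u v. g (a *\<^sub>R u) (b *\<^sub>R v) = a * b * g u v" "norm x = 1"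
    and "\<And>n. S n \<noteq> {}"
    and "\<forall>\<^sub>F n in sequentially. 0 < n \<and> (\<forall>(u, v)\<in>S n. (norm u)\<^sup>2 \<le> C / \<tau> n \<and> (norm v)\<^sup>2 \<le> C / \<tau> n)"
    and "AE \<omega> in M. (\<lambda>n. ereal (1 / \<tau> n) * m n \<omega>) \<longlonglongrightarrow> 0"
    and "\<And>n \<omega>. (SUP (u, v)\<in>{(u, v). norm u = 1 \<and> norm v = 1}.
            ereal \<bar>emp_gam \<gamma>R X Y n \<omega> u v - g u v\<bar>) \<le> m n \<omega>"
  shows "AE \<omega> in M. (\<lambda>n. SUP (u, v)\<in>S n. ereal \<bar>emp_gam \<gamma>R X Y n \<omega> u v - g u v\<bar>) \<longlonglongrightarrow> 0"
  using assms(6)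
proof (rule eventually_mono)
  fix \<omega>
  assume rate: "(\<lambda>n. ereal (1 / \<tau> n) * m n \<omega>) \<longlonglongrightarrow> 0"
  show "(\<lambda>n. SUP (u, v)\<in>S n. ereal \<bar>emp_gam \<gamma>R X Y n \<omega> u v - g u v\<bar>) \<longlonglongrightarrow> 0"
    by (rule SUP_tendsto_zero_bilinear[OF _ assms(4,3,3) eventually_mono[OF assms(5)] assms(7) rate])
      (auto simp: emp_gam_error_scaleR[where g = g, OF assms(1) _ assms(2)])
qed

lemma ex_norm_eq_1_if_scaled_SUP_tendsto_zero:
  fixes f g :: "nat \<Rightarrow> 'w \<Rightarrow> 'a::real_normed_vector \<Rightarrow> ereal" and h :: "nat \<Rightarrow> 'w \<Rightarrow> 'a \<Rightarrow> 'a \<Rightarrow> ereal"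
  assumes "prob_space M" "\<And>n. 0 < \<tau> n"
    and "AE \<omega> in M. (\<lambda>n. ereal (1 / \<tau> n) * max (SUP u\<in>{u. norm u = 1}. f n \<omega> u)
      (max (SUP v\<in>{v. norm v = 1}. g n \<omega> v) (SUP (u, v)\<in>{(u, v). norm u = 1 \<and> norm v = 1}. h n \<omega> u v)))
      \<longlonglongrightarrow> 0"
  obtains e :: 'a where "norm e = 1"
proof -
  \<comment> \<open>Otherwise every supremum ranges over the empty set and is \<open>-\<infinity>\<close>.\<close>
  have "\<exists>e::'a. norm e = 1"
  proof (rule ccontr)
    assume "\<nexists>e::'a. norm e = 1"
    moreover have "ereal (1 / \<tau> n) * - \<infinity> = - \<infinity>" for n
      using assms(2)[of n] by simp
    ultimately have "AE \<omega> in M. (\<lambda>n. - \<infinity> :: ereal) \<longlonglongrightarrow> 0"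
      using assms(3) by (simp add: bot_ereal_def)
    then show False
      using prob_space.AE_False[OF assms(1)] by (simp add: LIMSEQ_const_iff)
  qed
  then show thesis
    using that by blast
qed

theorem lemma1:
  fixes M :: "'w measure"
    and X Y :: "nat \<Rightarrow> 'w \<Rightarrow> 'h::{real_inner, complete_space}"
    and X0 Y0 :: "'w \<Rightarrow> 'h"
    and \<gamma>R :: "(real \<times> real) measure \<Rightarrow> real"
    and \<sigma>R :: "real measure \<Rightarrow> real"
    and Hs :: "'h set" and D :: "'h \<Rightarrow> 'h"
    and \<tau> :: "nat \<Rightarrow> real"
  assumes sep: "separable_space TYPE('h)"
    and P: "prob_space M"
    and func: "coassoc_functional \<gamma>R" "scale_functional \<sigma>R" "cs_bound \<gamma>R \<sigma>R"
    and smooth: "subspace Hs" "linear_on Hs D"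
    and meas0: "(\<lambda>\<omega>. (X0 \<omega>, Y0 \<omega>)) \<in> borel_measurable M"
    and meas: "\<And>i. (\<lambda>\<omega>. (X i \<omega>, Y i \<omega>)) \<in> borel_measurable M"
    and indep: "prob_space.indep_vars M (\<lambda>_. borel) (\<lambda>i \<omega>. (X i \<omega>, Y i \<omega>)) UNIV"
    and ident: "\<And>i. distr M borel (\<lambda>\<omega>. (X i \<omega>, Y i \<omega>)) = distr M borel (\<lambda>\<omega>. (X0 \<omega>, Y0 \<omega>))"
    and C1: "\<exists>c>0. \<exists>G :: 'h \<times> 'h \<Rightarrow> 'h \<times> 'h.
               self_adjoint G \<and> positive_op G \<and> compact_op G \<and>
               (\<forall>u. (pop_sig \<sigma>R M X0 u)\<^sup>2 = c * inner u (blk11 G u)) \<and>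
               (\<forall>v. (pop_sig \<sigma>R M Y0 v)\<^sup>2 = c * inner v (blk22 G v)) \<and>
               (\<forall>u v. pop_gam \<gamma>R M X0 Y0 u v = c * inner u (blk12 G v)) \<and>
               (\<forall>u. eigenfunction (blk11 G) u \<longrightarrow> u \<in> Hs) \<and>
               (\<forall>v. eigenfunction (blk22 G) v \<longrightarrow> v \<in> Hs)"
    and C3a: "\<forall>u\<in>nullsp Hs D. u \<noteq> 0 \<longrightarrow> pop_sig \<sigma>R M X0 u \<noteq> 0 \<and> pop_sig \<sigma>R M Y0 u \<noteq> 0"
    and C3b: "\<exists>B. finite B \<and> nullsp Hs D = span B"
             "\<exists>d>0. \<forall>u\<in>orth_compl (nullsp Hs D) \<inter> Hs. u \<noteq> 0 \<longrightarrow> Psi D u > d * (norm u)\<^sup>2"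
    and tau_pos: "\<And>n. \<tau> n > 0"
    and tau_lim: "\<tau> \<longlonglongrightarrow> 0"
    and rate: "AE \<omega> in M. (\<lambda>n. ereal (1 / \<tau> n) *
                 max (SUP u\<in>{u. norm u = 1}. ereal \<bar>(emp_sig \<sigma>R X n \<omega> u)\<^sup>2 - (pop_sig \<sigma>R M X0 u)\<^sup>2\<bar>)
                 (max (SUP v\<in>{v. norm v = 1}. ereal \<bar>(emp_sig \<sigma>R Y n \<omega> v)\<^sup>2 - (pop_sig \<sigma>R M Y0 v)\<^sup>2\<bar>)
                      (SUP (u,v)\<in>{(u,v). norm u = 1 \<and> norm v = 1}.
                          ereal \<bar>emp_gam \<gamma>R X Y n \<omega> u v - pop_gam \<gamma>R M X0 Y0 u v\<bar>)))
               \<longlonglongrightarrow> 0"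
  shows "AE \<omega> in M.
     (\<lambda>n. SUP u\<in>{u\<in>Hs. (pop_sig \<sigma>R M X0 u)\<^sup>2 + \<tau> n * Psi D u = 1}.
             ereal \<bar>(emp_sig \<sigma>R X n \<omega> u)\<^sup>2 - (pop_sig \<sigma>R M X0 u)\<^sup>2\<bar>) \<longlonglongrightarrow> 0
   \<and> (\<lambda>n. SUP v\<in>{v\<in>Hs. (pop_sig \<sigma>R M Y0 v)\<^sup>2 + \<tau> n * Psi D v = 1}.
             ereal \<bar>(emp_sig \<sigma>R Y n \<omega> v)\<^sup>2 - (pop_sig \<sigma>R M Y0 v)\<^sup>2\<bar>) \<longlonglongrightarrow> 0
   \<and> (\<lambda>n. SUP (u,v)\<in>{(u,v). u \<in> Hs \<and> v \<in> Hs \<and>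
                 (pop_sig \<sigma>R M X0 u)\<^sup>2 + \<tau> n * Psi D u = 1 \<and>
                 (pop_sig \<sigma>R M Y0 v)\<^sup>2 + \<tau> n * Psi D v = 1}.
             ereal \<bar>emp_gam \<gamma>R X Y n \<omega> u v - pop_gam \<gamma>R M X0 Y0 u v\<bar>) \<longlonglongrightarrow> 0"
proof -
  obtain c G where G: "self_adjoint G" "positive_op G" "compact_op G"
    and hX: "\<And>u. (pop_sig \<sigma>R M X0 u)\<^sup>2 = c * inner u (blk11 G u)"
    and hY: "\<And>v. (pop_sig \<sigma>R M Y0 v)\<^sup>2 = c * inner v (blk22 G v)"
    and hXY: "\<And>u v. pop_gam \<gamma>R M X0 Y0 u v = c * inner u (blk12 G v)"
    and eigen_smooth: "\<And>u. eigenfunction (blk11 G) u \<Longrightarrow> u \<in> Hs"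
    using C1 by blast
  have "bounded_linear G"
    using G(3) by (simp add: compact_op_def)
  note bl = bounded_linear_blk[OF this]
  note scaleX = sq_scaleR_if_quadratic_form[OF bounded_linear.linear[OF bl(1)] hX]
  note scaleY = sq_scaleR_if_quadratic_form[OF bounded_linear.linear[OF bl(3)] hY]
  have scaleXY: "pop_gam \<gamma>R M X0 Y0 (a *\<^sub>R u) (b *\<^sub>R v) = a * b * pop_gam \<gamma>R M X0 Y0 u v" for a b u v
    using linear_cmul[OF bounded_linear.linear[OF bl(2)]] by (simp add: hXY)
  obtain CX where CX: "\<And>t u. 0 < t \<Longrightarrow> t \<le> 1 \<Longrightarrow> u \<in> penalized_sphere (\<lambda>u. (pop_sig \<sigma>R M X0 u)\<^sup>2) Hs D t
      \<Longrightarrow> (norm u)\<^sup>2 \<le> CX / t"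
    using penalized_sphere_norm_bound[OF bl(1) hX smooth _ C3b] C3a by blast
  obtain CY where CY: "\<And>t v. 0 < t \<Longrightarrow> t \<le> 1 \<Longrightarrow> v \<in> penalized_sphere (\<lambda>v. (pop_sig \<sigma>R M Y0 v)\<^sup>2) Hs D t
      \<Longrightarrow> (norm v)\<^sup>2 \<le> CY / t"
    using penalized_sphere_norm_bound[OF bl(3) hY smooth _ C3b] C3a by blast
  \<comment> \<open>The rate hypothesis rules out the trivial space; a smooth eigenfunction of blk11 G then
    makes the penalized spheres nonempty.\<close>
  obtain e0 :: 'h where e0: "norm e0 = 1"
    using ex_norm_eq_1_if_scaled_SUP_tendsto_zero[OF P tau_pos rate] .
  then have "e0 \<noteq> 0"
    by auto
  then obtain h0 where "eigenfunction (blk11 G) h0"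
    using compact_op_has_eigenfunction[OF compact_op_blk11[OF G(3)] self_adjoint_blk11[OF G(1)]
        positive_op_blk11[OF G(2)]] by blast
  then have h0: "h0 \<in> Hs" "h0 \<noteq> 0"
    using eigen_smooth by (auto simp: eigenfunction_def)
  have nonempty: "penalized_sphere (\<lambda>u. (pop_sig \<sigma>R M X0 u)\<^sup>2) Hs D (\<tau> n) \<noteq> {}"
    "penalized_sphere (\<lambda>v. (pop_sig \<sigma>R M Y0 v)\<^sup>2) Hs D (\<tau> n) \<noteq> {}" for n
    by (intro penalized_sphere_nonempty[OF smooth h0(1) tau_pos]; use C3a h0 in \<open>simp add: scaleX scaleY\<close>)+
  have max_div: "CX / \<tau> n \<le> max CX CY / \<tau> n" "CY / \<tau> n \<le> max CX CY / \<tau> n" for n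
    using tau_pos[of n] by (simp_all add: divide_right_mono)
  have "\<forall>\<^sub>F n in sequentially. 0 < n \<and> \<tau> n \<le> 1"
    using eventually_gt_at_top[of 0] order_tendstoD(2)[OF tau_lim zero_less_one]
    by eventually_elim simp
  then have large_n: "\<forall>\<^sub>F n in sequentially. 0 < n \<and>
      (\<forall>u\<in>penalized_sphere (\<lambda>u. (pop_sig \<sigma>R M X0 u)\<^sup>2) Hs D (\<tau> n). (norm u)\<^sup>2 \<le> max CX CY / \<tau> n) \<and>
      (\<forall>v\<in>penalized_sphere (\<lambda>v. (pop_sig \<sigma>R M Y0 v)\<^sup>2) Hs D (\<tau> n). (norm v)\<^sup>2 \<le> max CX CY / \<tau> n)"
    by (rule eventually_mono)
      (use tau_pos in \<open>blast intro: order_trans[OF CX max_div(1)] order_trans[OF CY max_div(2)]\<close>)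
  have XY_nonempty: "{(u, v). u \<in> Hs \<and> v \<in> Hs \<and> (pop_sig \<sigma>R M X0 u)\<^sup>2 + \<tau> n * Psi D u = 1 \<and>
      (pop_sig \<sigma>R M Y0 v)\<^sup>2 + \<tau> n * Psi D v = 1} \<noteq> {}" for n
    using nonempty[of n] unfolding penalized_sphere_def by blast
  show ?thesis
  proof (intro eventually_conj
      AE_SUP_sig_error_tendsto_zero[where s = "pop_sig \<sigma>R M X0", OF func(2) scaleX e0 _ _ rate]
      AE_SUP_sig_error_tendsto_zero[where s = "pop_sig \<sigma>R M Y0", OF func(2) scaleY e0 _ _ rate]
      AE_SUP_gam_error_tendsto_zero[where g = "pop_gam \<gamma>R M X0 Y0", OF func(1) scaleXY e0 _ _ rate])
  qed (use nonempty XY_nonempty large_n in \<open>auto simp: penalized_sphere_def le_max_iff_disj elim!: eventually_mono\<close>)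
qed

end
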